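(* Let $n>24$, $\epsilon>0$, $L>9$, and $m=Ln$ (assumed to be an integer). Let $v=(v_1,\dots,v_n)$ with $v_i\ge0$ and $\sum_i v_i=1$. Then $$\mathsf P\left\{\mathrm{AST}(v,x)\le L\,n\,\|v\|\,\|p\|\,(1+8\epsilon)+1\right\}\ \ge\ 1-\frac{10}{9}e^{-L\epsilon^2}.$$
   Context: Standing setup: $U$ is a finite set (the key space) with a probability measure $q$; $T=\{1,\dots,n\}$; $h:U\to T$ is an arbitrary function. $p_i=\sum_{u\in h^{-1}(i)}q(u)$ and $\|p\|^2=\sum_{i=1}^n p_i^2$. $U^m$ carries the product measure $q^m$, and $\mathsf P$ denotes probability under $q^m$ for $x=(x_1,\dots,x_m)\in U^m$. $k_i(x)=|\{j: h(x_j)=i\}|$. $\|\cdot\|$ is the euclidean norm. The vector $v$ is a user's access pattern ($v_i$ = fraction of the user's searches directed to slot $i$). $\mathrm{AST}(v,x)$ denotes the average search time of such a user in a hash table with chaining after the keys $x$ have been inserted; in this model it satisfies $\mathrm{AST}(v,x)\le\sum_{i=1}^n v_i\,k_i(x)$. *)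

theory Defs
  imports "HOL-Probability.Probability"
begin

definition slot_prob :: "'a pmf \<Rightarrow> 'a set \<Rightarrow> ('a \<Rightarrow> nat) \<Rightarrow> nat \<Rightarrow> real" where
  "slot_prob q U h i = (\<Sum>u\<in>{u\<in>U. h u = i}. pmf q u)"

definition vnorm :: "nat \<Rightarrow> (nat \<Rightarrow> real) \<Rightarrow> real" where
  "vnorm n w = sqrt (\<Sum>i=1..n. (w i)^2)"

definition slot_count :: "('a \<Rightarrow> nat) \<Rightarrow> nat \<Rightarrow> nat \<Rightarrow> (nat \<Rightarrow> 'a) \<Rightarrow> nat" where
  "slot_count h m i x = card {j. j < m \<and> h (x j) = i}"

text \<open>The product measure q^m on U^m: key sequences as functions on {..<m}.\<close>
definition keys_pmf :: "nat \<Rightarrow> 'a pmf \<Rightarrow> (nat \<Rightarrow> 'a) pmf" where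
  "keys_pmf m q = Pi_pmf {..<m} undefined (\<lambda>_. q)"

end

theory Submission
  imports Defs
begin

text \<open>
  Put \<open>Y u = v (h u) / \<parallel>v\<parallel>\<close>, a variable with values in \<open>[0, 1]\<close>. The bound
  \<open>\<Sum>\<^sub>i v\<^sub>i k\<^sub>i(x)\<close> on \<open>AST(v, x)\<close> equals \<open>\<parallel>v\<parallel> \<Sum>\<^sub>j Y(x\<^sub>j)\<close>, a sum of \<open>m\<close> independent copies of \<open>Y\<close>,
  and by Cauchy-Schwarz \<open>E Y = \<Sum>\<^sub>i v\<^sub>i p\<^sub>i / \<parallel>v\<parallel> \<le> \<parallel>p\<parallel>\<close>. So it suffices to bound
  the probability that this sum exceeds \<open>(1 + 8\<epsilon>) m \<parallel>p\<parallel>\<close>. If \<open>\<parallel>p\<parallel> (1 + 8\<epsilon>) \<ge> 1\<close>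
  this is impossible, as the sum is at most \<open>m\<close>. Otherwise the Chernoff bound
  \<open>exp (m \<parallel>p\<parallel> (e\<^sup>l - 1) - l (1 + 8\<epsilon>) m \<parallel>p\<parallel>)\<close> with \<open>l = 4\<epsilon>\<close> (for \<open>\<epsilon> \<le> 1/4\<close>) or
  \<open>l = 1\<close> is at most \<open>exp (-L \<epsilon>\<^sup>2)\<close>, because \<open>1 = \<Sum>\<^sub>i p\<^sub>i \<le> \<surd>n \<parallel>p\<parallel>\<close> gives
  \<open>m \<parallel>p\<parallel>\<^sup>2 \<ge> L\<close>. This gives the bound even with constant \<open>1\<close> instead of \<open>10/9\<close>.
\<close>

lemma exp_mult_le_chord:
  fixes l y :: real
  assumes "0 \<le> y" "y \<le> 1"
  shows "exp (l * y) \<le> 1 + y * (exp l - 1)"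
proof -
  have "exp ((1 - y) *\<^sub>R 0 + y *\<^sub>R l) \<le> (1 - y) * exp 0 + y * exp l"
    using assms by (intro convex_onD[OF exp_convex]) auto
  then show ?thesis by (simp add: algebra_simps)
qed

lemma integrable_pmf_bounded:
  fixes Y :: "'a \<Rightarrow> real"
  assumes "\<forall>u\<in>set_pmf q. \<bar>Y u\<bar> \<le> B"
  shows "integrable (measure_pmf q) Y"
  using assms by (intro measure_pmf.integrable_const_bound[where B = B] AE_pmfI) auto

lemma integrable_pmf_exp_mult:
  fixes Y :: "'a \<Rightarrow> real"
  assumes "\<forall>u\<in>set_pmf q. 0 \<le> Y u \<and> Y u \<le> 1"
  shows "integrable (measure_pmf q) (\<lambda>u. exp (l * Y u))"
proof (rule integrable_pmf_bounded[where B = "exp \<bar>l\<bar>"], safe)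
  fix u assume "u \<in> set_pmf q"
  with assms have "l * Y u \<le> \<bar>l\<bar> * Y u" "\<bar>l\<bar> * Y u \<le> \<bar>l\<bar>"
    by (auto intro: mult_right_mono mult_right_le_one_le)
  then show "\<bar>exp (l * Y u)\<bar> \<le> exp \<bar>l\<bar>"
    by simp
qed

lemma pmf_expectation_exp_le:
  fixes Y :: "'a \<Rightarrow> real"
  assumes Y01: "\<forall>u\<in>set_pmf q. 0 \<le> Y u \<and> Y u \<le> 1"
    and EY: "measure_pmf.expectation q Y \<le> \<mu>" and "0 \<le> l"
  shows "measure_pmf.expectation q (\<lambda>u. exp (l * Y u)) \<le> exp (\<mu> * (exp l - 1))"
proof -
  have int: "integrable (measure_pmf q) Y"
    using Y01 by (intro integrable_pmf_bounded[where B = 1]) auto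
  have "measure_pmf.expectation q (\<lambda>u. exp (l * Y u))
      \<le> measure_pmf.expectation q (\<lambda>u. 1 + Y u * (exp l - 1))"
    using Y01 int by (intro integral_mono_AE AE_pmfI exp_mult_le_chord integrable_pmf_exp_mult) auto
  also have "\<dots> = 1 + measure_pmf.expectation q Y * (exp l - 1)"
    using int by simp
  also have "\<dots> \<le> 1 + \<mu> * (exp l - 1)"
    using EY \<open>0 \<le> l\<close> by (intro add_left_mono mult_right_mono) auto
  also have "\<dots> \<le> exp (\<mu> * (exp l - 1))"
    by (rule exp_ge_add_one_self)
  finally show ?thesis .
qed

lemma Pi_pmf_sum_le_card:
  fixes Y :: "'a \<Rightarrow> real"
  assumes "finite I" and "\<forall>u\<in>set_pmf q. Y u \<le> 1"
    and "x \<in> set_pmf (Pi_pmf I d (\<lambda>_. q))"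
  shows "(\<Sum>j\<in>I. Y (x j)) \<le> real (card I)"
proof -
  have "x j \<in> set_pmf q" if "j \<in> I" for j
    using that assms(3) set_Pi_pmf_subset'[OF \<open>finite I\<close>] by (force simp: PiE_dflt_def)
  then show ?thesis
    using assms(2) sum_mono[of I "\<lambda>j. Y (x j)" "\<lambda>_. 1"] by auto
qed

lemma prob_Pi_pmf_sum_ge_le_exp:
  fixes Y :: "'a \<Rightarrow> real"
  assumes "finite I"
    and Y01: "\<forall>u\<in>set_pmf q. 0 \<le> Y u \<and> Y u \<le> 1"
    and EY: "measure_pmf.expectation q Y \<le> \<mu>" and "0 < l"
  shows "measure_pmf.prob (Pi_pmf I d (\<lambda>_. q)) {x. a \<le> (\<Sum>j\<in>I. Y (x j))}
           \<le> exp (real (card I) * \<mu> * (exp l - 1) - l * a)"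
proof -
  define D where "D = Pi_pmf I d (\<lambda>_. q)"
  have exp_of_sum: "exp (l * (\<Sum>j\<in>I. Y (x j))) = (\<Prod>j\<in>I. exp (l * Y (x j)))" for x
    using \<open>finite I\<close> by (simp add: sum_distrib_left exp_sum)
  have int: "integrable (measure_pmf D) (\<lambda>x. exp (l * (\<Sum>j\<in>I. Y (x j))))"
  proof (rule integrable_pmf_bounded[where B = "exp (l * card I)"], safe)
    fix x assume "x \<in> set_pmf D"
    then have "(\<Sum>j\<in>I. Y (x j)) \<le> card I"
      using Pi_pmf_sum_le_card[OF \<open>finite I\<close>, of q Y x d] Y01 by (auto simp: D_def)
    then show "\<bar>exp (l * (\<Sum>j\<in>I. Y (x j)))\<bar> \<le> exp (l * card I)"
      using \<open>0 < l\<close> by simp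
  qed
  have "measure_pmf.prob D {x. a \<le> (\<Sum>j\<in>I. Y (x j))}
      \<le> exp (- l * a) * measure_pmf.expectation D (\<lambda>x. exp (l * (\<Sum>j\<in>I. Y (x j))))"
    using measure_pmf.Chernoff_ineq_ge[OF \<open>0 < l\<close>, where M = D and A = "space (measure_pmf D)"
        and f = "\<lambda>x. \<Sum>j\<in>I. Y (x j)" and a = a]
    unfolding set_integral_space[OF int] by (simp add: set_integrable_def int)
  also have "measure_pmf.expectation D (\<lambda>x. exp (l * (\<Sum>j\<in>I. Y (x j))))
      = measure_pmf.expectation q (\<lambda>u. exp (l * Y u)) ^ card I"
    unfolding exp_of_sum D_def
    by (subst expectation_prod_Pi_pmf) (auto intro: \<open>finite I\<close> integrable_pmf_exp_mult[OF Y01])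
  also have "\<dots> \<le> exp (\<mu> * (exp l - 1)) ^ card I"
    using pmf_expectation_exp_le[OF Y01 EY] \<open>0 < l\<close> by (intro power_mono) auto
  finally show ?thesis
    by (simp add: D_def exp_add[symmetric] exp_of_nat_mult[symmetric] algebra_simps)
qed

lemma exists_Chernoff_exponent_le:
  fixes \<epsilon> M P L :: real
  assumes "0 < \<epsilon>" "0 \<le> M" "0 \<le> P" "P * (1 + 8 * \<epsilon>) < 1" "L \<le> M * P"
  shows "\<exists>l>0. M * (exp l - 1) - l * ((1 + 8 * \<epsilon>) * M) \<le> - L * \<epsilon>^2"
proof (cases "\<epsilon> \<le> 1/4")
  case True
  have "P \<le> P * (1 + 8 * \<epsilon>)"
    using assms by (simp add: algebra_simps)
  then have "P \<le> 1"
    using assms(4) by linarith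
  then have "L \<le> M"
    using assms(2,5) mult_left_le[of P M] by linarith
  have "exp (4 * \<epsilon>) - 1 \<le> 4 * \<epsilon> + 16 * \<epsilon>^2"
    using exp_bound[of "4 * \<epsilon>"] True \<open>0 < \<epsilon>\<close> by (simp add: power2_eq_square)
  then have "M * (exp (4 * \<epsilon>) - 1) \<le> M * (4 * \<epsilon> + 16 * \<epsilon>^2)"
    using \<open>0 \<le> M\<close> by (rule mult_left_mono)
  also have "\<dots> = 4 * \<epsilon> * ((1 + 8 * \<epsilon>) * M) - 16 * (\<epsilon>^2 * M)"
    by (simp add: algebra_simps power2_eq_square)
  also have "\<dots> \<le> 4 * \<epsilon> * ((1 + 8 * \<epsilon>) * M) - \<epsilon>^2 * L"
    using \<open>L \<le> M\<close> \<open>0 \<le> M\<close> mult_left_mono[of L M "\<epsilon>^2", OF _ zero_le_power2]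
      mult_nonneg_nonneg[OF zero_le_power2[of \<epsilon>] \<open>0 \<le> M\<close>] by linarith
  finally show ?thesis
    using \<open>0 < \<epsilon>\<close> by (intro exI[of _ "4 * \<epsilon>"]) (auto simp: mult.commute)
next
  case False
  have "8 * (P * \<epsilon>) \<le> 1"
    using assms by (simp add: algebra_simps)
  have "L * \<epsilon> \<le> M * P * \<epsilon>"
    using assms by (intro mult_right_mono) auto
  also have "\<dots> \<le> M / 8"
    using \<open>8 * (P * \<epsilon>) \<le> 1\<close> \<open>0 \<le> M\<close> mult_left_mono[of "8 * (P * \<epsilon>)" 1 M]
    by (simp add: mult.assoc)
  finally have "L * \<epsilon>^2 \<le> \<epsilon> * M / 8"
    using \<open>0 < \<epsilon>\<close> mult_right_mono[of "L * \<epsilon>" "M / 8" \<epsilon>]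
    by (simp add: power2_eq_square mult.commute mult.left_commute)
  moreover have "M * (exp 1 - 1) \<le> M * 2"
    using exp_le \<open>0 \<le> M\<close> by (intro mult_left_mono) auto
  moreover have "M \<le> 4 * (\<epsilon> * M)"
    using False \<open>0 \<le> M\<close> mult_right_mono[of 1 "4 * \<epsilon>" M] by simp
  moreover have "(1 + 8 * \<epsilon>) * M = M + 8 * (\<epsilon> * M)"
    by (simp add: algebra_simps)
  ultimately have "M * (exp 1 - 1) - (1 + 8 * \<epsilon>) * M \<le> - (L * \<epsilon>^2)"
    using \<open>0 \<le> M\<close> by linarith
  then show ?thesis
    by (intro exI[of _ 1]) auto
qed

lemma prob_Pi_pmf_sum_gt_le_exp_neg_sq:
  fixes Y :: "'a \<Rightarrow> real"
  assumes "finite I"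
    and Y01: "\<forall>u\<in>set_pmf q. 0 \<le> Y u \<and> Y u \<le> 1"
    and EY: "measure_pmf.expectation q Y \<le> P"
    and "0 < \<epsilon>" and L: "L \<le> real (card I) * P^2"
  shows "measure_pmf.prob (Pi_pmf I d (\<lambda>_. q))
           {x. (1 + 8 * \<epsilon>) * (real (card I) * P) < (\<Sum>j\<in>I. Y (x j))}
         \<le> exp (- L * \<epsilon>^2)"
proof -
  define D where "D = Pi_pmf I d (\<lambda>_. q)"
  define M where "M = real (card I) * P"
  have "0 \<le> measure_pmf.expectation q Y"
    using Y01 by (intro integral_nonneg_AE AE_pmfI) auto
  then have "0 \<le> P"
    using EY by linarith
  show ?thesis
  proof (cases "P * (1 + 8 * \<epsilon>) < 1")
    case True
    have "L \<le> M * P"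
      using L by (simp add: M_def power2_eq_square mult.assoc)
    moreover have "0 \<le> M"
      using \<open>0 \<le> P\<close> by (simp add: M_def)
    ultimately obtain l where "0 < l" and l: "M * (exp l - 1) - l * ((1 + 8 * \<epsilon>) * M) \<le> - L * \<epsilon>^2"
      using exists_Chernoff_exponent_le[OF \<open>0 < \<epsilon>\<close> _ \<open>0 \<le> P\<close> True] by blast
    have "measure_pmf.prob D {x. (1 + 8 * \<epsilon>) * M < (\<Sum>j\<in>I. Y (x j))}
        \<le> measure_pmf.prob D {x. (1 + 8 * \<epsilon>) * M \<le> (\<Sum>j\<in>I. Y (x j))}"
      by (intro measure_pmf.finite_measure_mono) auto
    also have "\<dots> \<le> exp (M * (exp l - 1) - l * ((1 + 8 * \<epsilon>) * M))"
      using prob_Pi_pmf_sum_ge_le_exp[OF \<open>finite I\<close> Y01 EY \<open>0 < l\<close>]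
      by (simp add: D_def M_def mult.assoc)
    also have "\<dots> \<le> exp (- L * \<epsilon>^2)"
      using l by simp
    finally show ?thesis
      by (simp add: D_def M_def)
  next
    case False
    have "real (card I) \<le> (1 + 8 * \<epsilon>) * M"
      using False mult_left_mono[of 1 "P * (1 + 8 * \<epsilon>)" "real (card I)"] by (simp add: M_def ac_simps)
    then have "set_pmf D \<inter> {x. (1 + 8 * \<epsilon>) * M < (\<Sum>j\<in>I. Y (x j))} = {}"
      using Pi_pmf_sum_le_card[OF \<open>finite I\<close>] Y01 by (force simp: D_def)
    then have "measure_pmf.prob D {x. (1 + 8 * \<epsilon>) * M < (\<Sum>j\<in>I. Y (x j))} = 0"
      by (simp add: measure_pmf_zero_iff)
    then show ?thesis
      by (simp add: D_def M_def)
  qed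
qed

lemma measure_pmf_prob_ge_1_minus:
  assumes "\<And>x. x \<in> set_pmf D \<Longrightarrow> x \<notin> A \<Longrightarrow> x \<in> B"
  shows "1 - measure_pmf.prob D B \<le> measure_pmf.prob D A"
proof -
  have "measure_pmf.prob D (UNIV - A) \<le> measure_pmf.prob D B"
    using assms by (intro measure_pmf.finite_measure_mono_AE AE_pmfI) auto
  then show ?thesis
    using measure_pmf.prob_compl[of A D] by simp
qed

lemma vnorm_eq_L2_set: "vnorm n w = L2_set w {1..n}"
  by (simp add: vnorm_def L2_set_def)

lemma vnorm_nonneg: "0 \<le> vnorm n w"
  by (simp add: vnorm_eq_L2_set)

lemma vnorm_eq_0_iff: "vnorm n w = 0 \<longleftrightarrow> (\<forall>i\<in>{1..n}. w i = 0)"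
  by (simp add: vnorm_eq_L2_set L2_set_eq_0_iff)

lemma le_vnorm: "i \<in> {1..n} \<Longrightarrow> w i \<le> vnorm n w"
  by (simp add: vnorm_eq_L2_set member_le_L2_set)

lemma sum_mult_le_vnorm:
  assumes "\<forall>i\<in>{1..n}. 0 \<le> w i" "\<forall>i\<in>{1..n}. 0 \<le> z i"
  shows "(\<Sum>i=1..n. w i * z i) \<le> vnorm n w * vnorm n z"
  using L2_set_mult_ineq[of w z "{1..n}"] assms by (simp add: vnorm_eq_L2_set)

lemma sum_squared_le_vnorm_squared: "(\<Sum>i=1..n. w i)^2 \<le> real n * (vnorm n w)^2"
proof -
  have "\<bar>\<Sum>i=1..n. w i\<bar> \<le> (\<Sum>i=1..n. \<bar>w i\<bar> * \<bar>1\<bar>)"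
    by (simp add: sum_abs)
  also have "\<dots> \<le> vnorm n w * sqrt (real n)"
    using L2_set_mult_ineq[of w "\<lambda>_. 1" "{1..n}"] by (simp add: vnorm_eq_L2_set L2_set_constant)
  finally have "\<bar>\<Sum>i=1..n. w i\<bar>^2 \<le> (vnorm n w * sqrt (real n))^2"
    by (intro power_mono) auto
  then show ?thesis
    by (simp add: power_mult_distrib mult.commute)
qed

lemma set_pmf_keys_pmf: "set_pmf q \<subseteq> U \<Longrightarrow> set_pmf (keys_pmf m q) \<subseteq> PiE {..<m} (\<lambda>_. U)"
  using set_Pi_pmf_subset'[of "{..<m}" undefined "\<lambda>_. q"]
  by (auto simp: keys_pmf_def PiE_dflt_def PiE_def extensional_def)

lemma sum_weighted_slot_count:
  assumes "\<forall>j<m. h (x j) \<in> {1..n}"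
  shows "(\<Sum>i=1..n. w i * real (slot_count h m i x)) = (\<Sum>j<m. w (h (x j)))"
proof -
  have "(\<Sum>i=1..n. w i * real (slot_count h m i x)) = (\<Sum>i=1..n. \<Sum>j<m. if h (x j) = i then w i else 0)"
  proof (intro sum.cong refl)
    fix i
    have "{j. j < m \<and> h (x j) = i} = {..<m} \<inter> {j. h (x j) = i}"
      by auto
    then show "w i * real (slot_count h m i x) = (\<Sum>j<m. if h (x j) = i then w i else 0)"
      by (simp add: slot_count_def sum.If_cases)
  qed
  also have "\<dots> = (\<Sum>j<m. \<Sum>i=1..n. if h (x j) = i then w i else 0)"
    by (rule sum.swap)
  also have "\<dots> = (\<Sum>j<m. w (h (x j)))"
    using assms by (intro sum.cong refl) (auto simp: sum.delta')
  finally show ?thesis .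
qed

lemma sum_weighted_slot_count_keys_pmf:
  assumes "set_pmf q \<subseteq> U" "\<forall>u\<in>U. h u \<in> {1..n}" "x \<in> set_pmf (keys_pmf m q)"
  shows "(\<Sum>i=1..n. w i * real (slot_count h m i x)) = (\<Sum>j<m. w (h (x j)))"
proof (rule sum_weighted_slot_count)
  have "x \<in> PiE {..<m} (\<lambda>_. U)"
    using set_pmf_keys_pmf[OF assms(1)] assms(3) by blast
  then show "\<forall>j<m. h (x j) \<in> {1..n}"
    using assms(2) by auto
qed

lemma expectation_slot_weight:
  assumes "finite U" "set_pmf q \<subseteq> U" "\<forall>u\<in>U. h u \<in> {1..n}"
  shows "measure_pmf.expectation q (\<lambda>u. w (h u)) = (\<Sum>i=1..n. w i * slot_prob q U h i)"
proof -
  have "measure_pmf.expectation q (\<lambda>u. w (h u)) = (\<Sum>u\<in>U. pmf q u * w (h u))"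
    using assms by (subst integral_measure_pmf[of U]) (auto simp: mult.commute)
  also have "\<dots> = (\<Sum>i=1..n. \<Sum>u\<in>{u\<in>U. h u = i}. pmf q u * w (h u))"
    using assms by (intro sum.group[symmetric]) auto
  also have "\<dots> = (\<Sum>i=1..n. w i * slot_prob q U h i)"
    by (simp add: slot_prob_def sum_distrib_left mult.commute)
  finally show ?thesis .
qed

lemma sum_slot_prob:
  assumes "finite U" "set_pmf q \<subseteq> U" "\<forall>u\<in>U. h u \<in> {1..n}"
  shows "(\<Sum>i=1..n. slot_prob q U h i) = 1"
  using expectation_slot_weight[OF assms, of "\<lambda>_. 1"] by simp

lemma slot_prob_nonneg: "0 \<le> slot_prob q U h i"
  by (simp add: slot_prob_def sum_nonneg)

lemma expectation_slot_weight_le_vnorm: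
  assumes "finite U" "set_pmf q \<subseteq> U" "\<forall>u\<in>U. h u \<in> {1..n}" "\<forall>i\<in>{1..n}. 0 \<le> w i"
  shows "measure_pmf.expectation q (\<lambda>u. w (h u)) \<le> vnorm n w * vnorm n (slot_prob q U h)"
  using expectation_slot_weight[OF assms(1-3)] sum_mult_le_vnorm[of n w] assms(4)
  by (simp add: slot_prob_nonneg)

lemma one_le_card_vnorm_slot_prob:
  assumes "finite U" "set_pmf q \<subseteq> U" "\<forall>u\<in>U. h u \<in> {1..n}"
  shows "1 \<le> real n * (vnorm n (slot_prob q U h))^2"
  using sum_squared_le_vnorm_squared[of "slot_prob q U h" n] sum_slot_prob[OF assms] by simp

lemma prob_weighted_load_gt_le_exp_neg_sq:
  assumes "finite U" "set_pmf q \<subseteq> U" "\<forall>u\<in>U. h u \<in> {1..n}"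
    and "\<forall>i\<in>{1..n}. 0 \<le> v i" "0 < vnorm n v" "0 < \<epsilon>"
    and "L \<le> real m * (vnorm n (slot_prob q U h))^2"
  shows "measure_pmf.prob (keys_pmf m q)
           {x. (1 + 8 * \<epsilon>) * (real m * vnorm n v * vnorm n (slot_prob q U h))
                 < (\<Sum>i=1..n. v i * real (slot_count h m i x))}
         \<le> exp (- L * \<epsilon>^2)"
proof -
  define W where "W = vnorm n v"
  define P where "P = vnorm n (slot_prob q U h)"
  define Y where "Y = (\<lambda>u. v (h u) / W)"
  have "0 < W"
    using assms(5) by (simp add: W_def)
  have Y01: "\<forall>u\<in>set_pmf q. 0 \<le> Y u \<and> Y u \<le> 1"
    using assms(2-4) le_vnorm[of _ n v] \<open>0 < W\<close> by (force simp: Y_def W_def)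
  have EY: "measure_pmf.expectation q Y \<le> P"
    using expectation_slot_weight_le_vnorm[OF assms(1-4)] \<open>0 < W\<close>
    by (simp add: Y_def W_def P_def pos_divide_le_eq mult.commute)
  have load: "(\<Sum>i=1..n. v i * real (slot_count h m i x)) = W * (\<Sum>j<m. Y (x j))"
    if "x \<in> set_pmf (keys_pmf m q)" for x
    using sum_weighted_slot_count_keys_pmf[OF assms(2,3) that] \<open>0 < W\<close>
    by (simp add: Y_def sum_distrib_left)
  have "(1 + 8 * \<epsilon>) * (real m * P) < (\<Sum>j<m. Y (x j))"
    if "x \<in> set_pmf (keys_pmf m q)"
      and "(1 + 8 * \<epsilon>) * (real m * W * P) < (\<Sum>i=1..n. v i * real (slot_count h m i x))" for x
  proof -
    have "W * ((1 + 8 * \<epsilon>) * (real m * P)) < W * (\<Sum>j<m. Y (x j))"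
      using that(2) unfolding load[OF that(1)] by (simp add: ac_simps)
    then show ?thesis
      using \<open>0 < W\<close> by simp
  qed
  then have "measure_pmf.prob (keys_pmf m q)
          {x. (1 + 8 * \<epsilon>) * (real m * W * P) < (\<Sum>i=1..n. v i * real (slot_count h m i x))}
      \<le> measure_pmf.prob (keys_pmf m q) {x. (1 + 8 * \<epsilon>) * (real m * P) < (\<Sum>j<m. Y (x j))}"
    by (intro measure_pmf.finite_measure_mono_AE AE_pmfI) auto
  also have "\<dots> \<le> exp (- L * \<epsilon>^2)"
    using prob_Pi_pmf_sum_gt_le_exp_neg_sq[OF finite_lessThan Y01 EY \<open>0 < \<epsilon>\<close>] assms(7)
    by (simp add: keys_pmf_def P_def)
  finally show ?thesis
    by (simp add: W_def P_def)
qed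

theorem corollary5:
  fixes U :: "'a set" and q :: "'a pmf" and h :: "'a \<Rightarrow> nat"
    and n m :: nat and L \<epsilon> :: real and v :: "nat \<Rightarrow> real"
    and AST :: "(nat \<Rightarrow> real) \<Rightarrow> (nat \<Rightarrow> 'a) \<Rightarrow> real"
  assumes "finite U" and "set_pmf q \<subseteq> U"
    and "\<forall>u\<in>U. h u \<in> {1..n}"
    and "n > 24" and "\<epsilon> > 0" and "L > 9" and "real m = L * real n"
    and "\<forall>i\<in>{1..n}. v i \<ge> 0" and "(\<Sum>i=1..n. v i) = 1"
    and "\<forall>x\<in>PiE {..<m} (\<lambda>_. U).
           AST v x \<le> (\<Sum>i=1..n. v i * real (slot_count h m i x))"
  shows "measure_pmf.prob (keys_pmf m q)
           {x. AST v x \<le> L * real n * vnorm n v * vnorm n (slot_prob q U h) * (1 + 8 * \<epsilon>) + 1}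
         \<ge> 1 - 10 / 9 * exp (- L * \<epsilon>^2)"
proof -
  define T where "T = L * real n * vnorm n v * vnorm n (slot_prob q U h) * (1 + 8 * \<epsilon>) + 1"
  define Bad where "Bad = {x. (1 + 8 * \<epsilon>) * (real m * vnorm n v * vnorm n (slot_prob q U h))
                           < (\<Sum>i=1..n. v i * real (slot_count h m i x))}"
  have "0 < vnorm n v"
    using vnorm_nonneg[of n v] vnorm_eq_0_iff[of n v] assms(9) by force
  have "L \<le> real m * (vnorm n (slot_prob q U h))^2"
    using one_le_card_vnorm_slot_prob[OF assms(1-3)] assms(6,7)
      mult_left_mono[of 1 "real n * (vnorm n (slot_prob q U h))^2" L] by (simp add: mult.assoc)
  then have tail: "measure_pmf.prob (keys_pmf m q) Bad \<le> exp (- L * \<epsilon>^2)"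
    unfolding Bad_def
    using prob_weighted_load_gt_le_exp_neg_sq[OF assms(1-3,8) \<open>0 < vnorm n v\<close> assms(5)] by blast
  have "x \<in> Bad" if "x \<in> set_pmf (keys_pmf m q)" "\<not> AST v x \<le> T" for x
  proof -
    have "AST v x \<le> (\<Sum>i=1..n. v i * real (slot_count h m i x))"
      using assms(10) set_pmf_keys_pmf[OF assms(2)] that(1) by blast
    then show ?thesis
      using that(2) assms(7) by (simp add: T_def Bad_def ac_simps)
  qed
  then have "1 - measure_pmf.prob (keys_pmf m q) Bad \<le> measure_pmf.prob (keys_pmf m q) {x. AST v x \<le> T}"
    by (intro measure_pmf_prob_ge_1_minus) auto
  then show ?thesis
    using tail exp_gt_zero[of "- L * \<epsilon>^2"] unfolding T_def by linarith
qed

end
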